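(* Let $K\subset\mathbb C$ be a number field, let $\pi\in K$ be a non-square, let $L=K(\sqrt\pi)$, and let $\sigma$ be the non-trivial automorphism of $L/K$. Let $\mathfrak b$ be a nonzero ideal of $\mathcal O_K$ such that $\mathfrak b\mathcal O_L=\beta\mathcal O_L$ for some $\beta\in L$. (1) If $\beta^{\sigma-1}=-1$, then $\pi\mathcal O_K$ is the square of a (fractional) ideal of $K$. (2) If $\beta^{\sigma-1}=\zeta$, where $\zeta$ is a primitive $2^m$th root of unity with $m\ge 2$, then $\pi_m\mathcal O_K$ is the square of a (fractional) ideal of $K$.
   Context: $\mathcal O_F$ denotes the ring of integers of a number field $F$, and $\beta^{\sigma-1}$ means $\sigma(\beta)/\beta$. For $n\ge2$, $\pi_n=2+\zeta_{2^n}+\zeta_{2^n}^{-1}$ with $\zeta_{2^n}=e^{2\pi i/2^n}$. *)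

theory Defs
  imports "HOL-Analysis.Analysis" "HOL-Computational_Algebra.Polynomial"
begin

definition is_subfield :: "complex set \<Rightarrow> bool" where
  "is_subfield K \<longleftrightarrow> 0 \<in> K \<and> 1 \<in> K \<and>
     (\<forall>x\<in>K. \<forall>y\<in>K. x + y \<in> K \<and> x - y \<in> K \<and> x * y \<in> K) \<and>
     (\<forall>x\<in>K. x \<noteq> 0 \<longrightarrow> inverse x \<in> K)"

definition number_field :: "complex set \<Rightarrow> bool" where
  "number_field K \<longleftrightarrow> is_subfield K \<and>
     (\<exists>B. finite B \<and> B \<subseteq> K \<and> (\<forall>x\<in>K. \<exists>c. x = (\<Sum>b\<in>B. of_rat (c b) * b)))"

definition ring_of_integers :: "complex set \<Rightarrow> complex set" where
  "ring_of_integers F = {x \<in> F. algebraic_int x}"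

definition ideal_mult :: "complex set \<Rightarrow> complex set \<Rightarrow> complex set" where
  "ideal_mult A B = {(\<Sum>i<n. a i * b i) | (n::nat) a b. \<forall>i<n. a i \<in> A \<and> b i \<in> B}"

definition principal_ideal :: "complex \<Rightarrow> complex set \<Rightarrow> complex set" where
  "principal_ideal x R = (\<lambda>r. x * r) ` R"

definition is_ideal :: "complex set \<Rightarrow> complex set \<Rightarrow> bool" where
  "is_ideal R I \<longleftrightarrow> I \<subseteq> R \<and> 0 \<in> I \<and> (\<forall>x\<in>I. \<forall>y\<in>I. x + y \<in> I) \<and>
     (\<forall>r\<in>R. \<forall>x\<in>I. r * x \<in> I)"

definition fractional_ideal :: "complex set \<Rightarrow> complex set \<Rightarrow> bool" where
  "fractional_ideal K J \<longleftrightarrow> J \<subseteq> K \<and> 0 \<in> J \<and> J \<noteq> {0} \<and>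
     (\<forall>x\<in>J. \<forall>y\<in>J. x + y \<in> J) \<and>
     (\<forall>r\<in>ring_of_integers K. \<forall>x\<in>J. r * x \<in> J) \<and>
     (\<exists>d\<in>ring_of_integers K. d \<noteq> 0 \<and> (\<forall>x\<in>J. d * x \<in> ring_of_integers K))"

text \<open>The quadratic extension K(s), where s is a square root of pi, and its conjugation
  automorphism a + b s \<mapsto> a - b s (well defined when pi is not a square in K).\<close>
definition quad_ext :: "complex set \<Rightarrow> complex \<Rightarrow> complex set" where
  "quad_ext K s = {a + b * s | a b. a \<in> K \<and> b \<in> K}"

definition quad_conj :: "complex set \<Rightarrow> complex \<Rightarrow> complex \<Rightarrow> complex" where
  "quad_conj K s x = (THE y. \<exists>a\<in>K. \<exists>b\<in>K. x = a + b * s \<and> y = a - b * s)"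

definition pi_n :: "nat \<Rightarrow> complex" where
  "pi_n n = 2 + exp (2 * of_real pi * \<i> / 2 ^ n) + inverse (exp (2 * of_real pi * \<i> / 2 ^ n))"

definition primitive_root_of_unity :: "nat \<Rightarrow> complex \<Rightarrow> bool" where
  "primitive_root_of_unity n z \<longleftrightarrow> z ^ n = 1 \<and> (\<forall>k. 0 < k \<and> k < n \<longrightarrow> z ^ k \<noteq> 1)"

end

theory Submission
  imports Defs "Jordan_Normal_Form.Char_Poly" "HOL-Number_Theory.Cong"
begin

text \<open>Let \<open>\<sigma>\<close> be the conjugation of \<open>L = K(\<surd>\<pi>)\<close> and \<open>\<bb>O\<^sub>L = \<beta>O\<^sub>L\<close>. For \<open>c \<in> K\<^sup>\<times>\<close> the
  fractional ideal \<open>J = c\<bb>\<close> satisfies \<open>JO\<^sub>L = \<gamma>O\<^sub>L\<close> with \<open>\<gamma> = c\<beta>\<close>, and \<open>J\<^sup>2 = tO\<^sub>K\<close> as soon as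
  \<open>\<gamma>\<^sup>2/t\<close> is integral and \<open>t = u \<gamma> \<sigma>(\<gamma>)\<close> with \<open>u \<in> O\<^sub>K\<close>: the first condition gives
  \<open>J\<^sup>2 \<subseteq> tO\<^sub>K\<close>, and writing \<open>\<gamma> = \<Sum> \<alpha>\<^sub>i y\<^sub>i\<close> with \<open>\<alpha>\<^sub>i \<in> J\<close>, \<open>y\<^sub>i \<in> O\<^sub>L\<close> exhibits \<open>\<gamma> \<sigma>(\<gamma>)\<close> as
  an \<open>O\<^sub>K\<close>-combination of the products \<open>\<alpha>\<^sub>i \<alpha>\<^sub>j\<close>, whose coefficients are norms and traces of
  integers of \<open>L\<close>; hence \<open>t \<in> J\<^sup>2\<close>.

  If \<open>\<sigma>(\<beta>) = -\<beta>\<close> then \<open>\<beta> \<in> K\<surd>\<pi>\<close>, and \<open>\<gamma> = \<surd>\<pi>\<close>, \<open>t = \<pi>\<close>, \<open>u = -1\<close> work. If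
  \<open>\<sigma>(\<beta>) = \<zeta>\<beta>\<close>, then \<open>c = Tr(\<beta>)/N(\<beta>)\<close> gives \<open>\<gamma> = 1 + \<zeta>\<^sup>-\<^sup>1\<close>, whose norm \<open>2 + \<zeta> + \<zeta>\<^sup>-\<^sup>1\<close>
  is an associate of \<open>\<pi>\<^sub>m\<close>, and \<open>\<gamma>\<^sup>2 = \<zeta>\<^sup>-\<^sup>1(2 + \<zeta> + \<zeta>\<^sup>-\<^sup>1)\<close>; so \<open>t = \<pi>\<^sub>m\<close> works.\<close>

section \<open>Algebraic integers\<close>

lemma algebraic_int_of_int_matrix_eigenvector:
  fixes x :: "'a :: field_char_0" and f :: "nat \<Rightarrow> 'a" and a :: "nat \<Rightarrow> nat \<Rightarrow> int"
  assumes nonzero: "i0 < n" "f i0 \<noteq> 0"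
    and eigen: "\<And>i. i < n \<Longrightarrow> x * f i = (\<Sum>j<n. of_int (a i j) * f j)"
  shows "algebraic_int x"
proof -
  define A :: "int mat" where "A = mat n n (\<lambda>(i,j). a i j)"
  define Am :: "'a mat" where "Am = map_mat of_int A"
  define v where "v = vec n f"
  have A: "A \<in> carrier_mat n n" unfolding A_def by simp
  have Am: "Am \<in> carrier_mat n n" unfolding Am_def using A by simp
  have "Am *\<^sub>v v = x \<cdot>\<^sub>v v"
  proof (rule eq_vecI)
    fix i assume "i < dim_vec (x \<cdot>\<^sub>v v)"
    hence i: "i < n" unfolding v_def by simp
    have "(Am *\<^sub>v v) $ i = (\<Sum>j = 0..<n. of_int (a i j) * f j)"
      using i unfolding Am_def A_def v_def by (simp add: scalar_prod_def)
    also have "\<dots> = x * f i" using eigen[OF i] by (simp add: atLeast0LessThan)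
    finally show "(Am *\<^sub>v v) $ i = (x \<cdot>\<^sub>v v) $ i" using i unfolding v_def by simp
  qed (simp add: Am_def A_def v_def)
  moreover have "v \<in> carrier_vec n" "v \<noteq> 0\<^sub>v n"
    using nonzero unfolding v_def by (auto simp: vec_eq_iff)
  ultimately have "eigenvalue Am x" unfolding eigenvalue_def eigenvector_def using Am by auto
  hence "poly (char_poly Am) x = 0" using eigenvalue_root_char_poly[OF Am] by simp
  moreover have "char_poly Am = map_poly of_int (char_poly A)"
    unfolding Am_def by (rule of_int_hom.char_poly_hom[OF A])
  moreover have "lead_coeff (char_poly A) = 1" using degree_monic_char_poly[OF A] by simp
  ultimately show ?thesis unfolding algebraic_int_altdef_ipoly by metis
qed

definition int_span :: "'a :: comm_ring_1 set \<Rightarrow> 'a set" where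
  "int_span S = {(\<Sum>h\<in>S. of_int (c h) * h) | c. True}"

lemma int_spanI: "z = (\<Sum>h\<in>S. of_int (c h) * h) \<Longrightarrow> z \<in> int_span S"
  unfolding int_span_def by blast

lemma int_span_zero: "0 \<in> int_span S"
  by (rule int_spanI[where c = "\<lambda>_. 0"]) simp

lemma int_span_add:
  assumes "z \<in> int_span S" "w \<in> int_span S"
  shows "z + w \<in> int_span S"
proof -
  obtain c d where "z = (\<Sum>h\<in>S. of_int (c h) * h)" "w = (\<Sum>h\<in>S. of_int (d h) * h)"
    using assms unfolding int_span_def by blast
  hence "z + w = (\<Sum>h\<in>S. of_int (c h + d h) * h)"
    by (simp add: sum.distrib distrib_right)
  thus ?thesis by (rule int_spanI)
qed

lemma int_span_of_int_mult:
  assumes "z \<in> int_span S"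
  shows "of_int k * z \<in> int_span S"
proof -
  obtain c where "z = (\<Sum>h\<in>S. of_int (c h) * h)"
    using assms unfolding int_span_def by blast
  hence "of_int k * z = (\<Sum>h\<in>S. of_int (k * c h) * h)"
    by (simp add: sum_distrib_left mult.assoc)
  thus ?thesis by (rule int_spanI)
qed

lemma int_span_generator:
  assumes "finite S" "h \<in> S"
  shows "h \<in> int_span S"
proof (rule int_spanI[where c = "\<lambda>h'. if h' = h then 1 else 0"])
  have "(\<Sum>h'\<in>S. of_int (if h' = h then 1 else 0) * h') = (\<Sum>h'\<in>S. if h' = h then h' else 0)"
    by (rule sum.cong) auto
  also have "\<dots> = h" using assms by simp
  finally show "h = (\<Sum>h'\<in>S. of_int (if h' = h then 1 else 0) * h')" by simp
qed

lemma int_span_sum: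
  "(\<And>i. i \<in> I \<Longrightarrow> f i \<in> int_span S) \<Longrightarrow> sum f I \<in> int_span S"
  by (induction I rule: infinite_finite_induct) (auto intro: int_span_zero int_span_add)

lemma int_span_mult:
  assumes "finite S" "z \<in> int_span S" "\<And>g. g \<in> S \<Longrightarrow> g * w \<in> int_span T"
  shows "z * w \<in> int_span T"
proof -
  obtain c where z: "z = (\<Sum>h\<in>S. of_int (c h) * h)"
    using assms(2) unfolding int_span_def by blast
  have "z * w = (\<Sum>h\<in>S. of_int (c h) * (h * w))"
    unfolding z by (simp add: sum_distrib_right mult.assoc)
  also have "\<dots> \<in> int_span T"
    by (intro int_span_sum int_span_of_int_mult assms(3))
  finally show ?thesis .
qed

lemma algebraic_int_if_stable_int_span:
  fixes x :: "'a :: field_char_0"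
  assumes S: "finite S" "g \<in> S" "g \<noteq> 0" and stable: "\<And>h. h \<in> S \<Longrightarrow> x * h \<in> int_span S"
  shows "algebraic_int x"
proof -
  define n where "n = card S"
  obtain f where f: "bij_betw f {..<n} S"
    using ex_bij_betw_nat_finite[OF S(1)] unfolding n_def by (auto simp: atLeast0LessThan)
  have "\<exists>c. x * f i = (\<Sum>h\<in>S. of_int (c h) * h)" if "i < n" for i
    using stable[of "f i"] f that unfolding int_span_def bij_betw_def by blast
  then obtain c where c: "\<And>i. i < n \<Longrightarrow> x * f i = (\<Sum>h\<in>S. of_int (c i h) * h)" by metis
  obtain i0 where i0: "i0 < n" "f i0 = g" using f S(2) by (auto simp: bij_betw_def)
  show ?thesis
  proof (rule algebraic_int_of_int_matrix_eigenvector[of i0 n f x "\<lambda>i j. c i (f j)"])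
    fix i assume "i < n"
    have "x * f i = (\<Sum>h\<in>S. of_int (c i h) * h)" using c[OF \<open>i < n\<close>] .
    also have "\<dots> = (\<Sum>j<n. of_int (c i (f j)) * f j)"
      by (rule sum.reindex_bij_betw[OF f, symmetric])
    finally show "x * f i = (\<Sum>j<n. of_int (c i (f j)) * f j)" .
  qed (use i0 S in auto)
qed

lemma algebraic_int_stable_int_span:
  fixes x :: "'a :: field_char_0"
  assumes "algebraic_int x"
  obtains S where "finite S" "1 \<in> S" "\<And>h. h \<in> S \<Longrightarrow> x * h \<in> int_span S"
proof -
  obtain p where p: "lead_coeff p = 1" "\<forall>i. coeff p i \<in> \<int>" "poly p x = 0"
    using assms by (auto simp: algebraic_int.simps)
  define n where "n = degree p"
  have "n > 0"
  proof (rule ccontr)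
    assume "\<not> n > 0"
    hence "p = 1" using p(1) unfolding n_def by (metis degree_0_id gr0I one_pCons)
    thus False using p(3) by simp
  qed
  define S where "S = (\<lambda>i. x ^ i) ` {..<n}"
  have finS: "finite S" unfolding S_def by simp
  have power_in_span: "x ^ i \<in> int_span S" if "i < n" for i
    using that by (intro int_span_generator[OF finS]) (auto simp: S_def)
  have "x ^ n = (\<Sum>k<n. - coeff p k * x ^ k)"
  proof -
    have "0 = (\<Sum>k\<le>n. coeff p k * x ^ k)" using p(3) unfolding n_def by (simp add: poly_altdef)
    also have "\<dots> = (\<Sum>k<n. coeff p k * x ^ k) + x ^ n"
      using p(1) unfolding n_def by (simp add: lessThan_Suc_atMost[symmetric])
    finally show ?thesis by (simp add: sum_negf add_eq_0_iff)
  qed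
  also have "\<dots> \<in> int_span S"
  proof (rule int_span_sum)
    fix k assume k: "k \<in> {..<n}"
    obtain m where "coeff p k = of_int m" using p(2) by (meson Ints_cases)
    thus "- coeff p k * x ^ k \<in> int_span S"
      using k power_in_span int_span_of_int_mult[of _ S "- m"] by simp
  qed
  finally have top: "x ^ n \<in> int_span S" .
  show ?thesis
  proof
    show "1 \<in> S" unfolding S_def using \<open>n > 0\<close> by (auto intro: image_eqI[of _ _ 0])
    fix h assume "h \<in> S"
    then obtain i where i: "i < n" "h = x ^ i" unfolding S_def by auto
    show "x * h \<in> int_span S"
      using i top power_in_span[of "Suc i"] by (cases "Suc i = n") auto
  qed (rule finS)
qed

lemma algebraic_int_common_stable_int_span:
  fixes x y :: "'a :: field_char_0"
  assumes "algebraic_int x" "algebraic_int y"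
  obtains U where "finite U" "1 \<in> U"
    "\<And>u. u \<in> U \<Longrightarrow> x * u \<in> int_span U" "\<And>u. u \<in> U \<Longrightarrow> y * u \<in> int_span U"
proof -
  obtain S where S: "finite S" "1 \<in> S" "\<And>h. h \<in> S \<Longrightarrow> x * h \<in> int_span S"
    using algebraic_int_stable_int_span[OF assms(1)] by blast
  obtain T where T: "finite T" "1 \<in> T" "\<And>h. h \<in> T \<Longrightarrow> y * h \<in> int_span T"
    using algebraic_int_stable_int_span[OF assms(2)] by blast
  define U where "U = (\<lambda>(g,h). g * h) ` (S \<times> T)"
  have finU: "finite U" unfolding U_def using S T by simp
  have in_span: "g * h \<in> int_span U" if "g \<in> S" "h \<in> T" for g h
    using that by (intro int_span_generator[OF finU]) (force simp: U_def)
  show ?thesis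
  proof
    show "1 \<in> U" unfolding U_def using S T by (auto intro: image_eqI[of _ _ "(1,1)"])
    fix u assume "u \<in> U"
    then obtain g h where gh: "g \<in> S" "h \<in> T" "u = g * h" unfolding U_def by auto
    have "(x * g) * h \<in> int_span U"
      by (rule int_span_mult[OF S(1) S(3)[OF gh(1)]]) (use gh in_span in auto)
    thus "x * u \<in> int_span U" using gh by (simp add: mult.assoc)
    have "(y * h) * g \<in> int_span U"
      by (rule int_span_mult[OF T(1) T(3)[OF gh(2)]]) (use gh in_span in \<open>auto simp: mult.commute[of _ g]\<close>)
    thus "y * u \<in> int_span U" using gh by (simp add: mult_ac)
  qed (rule finU)
qed

lemma algebraic_int_add:
  fixes x y :: "'a :: field_char_0"
  assumes "algebraic_int x" "algebraic_int y"
  shows "algebraic_int (x + y)"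
proof -
  obtain U where U: "finite U" "1 \<in> U"
    "\<And>u. u \<in> U \<Longrightarrow> x * u \<in> int_span U" "\<And>u. u \<in> U \<Longrightarrow> y * u \<in> int_span U"
    using algebraic_int_common_stable_int_span[OF assms] by blast
  show ?thesis
    by (rule algebraic_int_if_stable_int_span[OF U(1,2) one_neq_zero])
       (use U in \<open>auto simp: distrib_right intro: int_span_add\<close>)
qed

lemma algebraic_int_mult:
  fixes x y :: "'a :: field_char_0"
  assumes "algebraic_int x" "algebraic_int y"
  shows "algebraic_int (x * y)"
proof -
  obtain U where U: "finite U" "1 \<in> U"
    "\<And>u. u \<in> U \<Longrightarrow> x * u \<in> int_span U" "\<And>u. u \<in> U \<Longrightarrow> y * u \<in> int_span U"
    using algebraic_int_common_stable_int_span[OF assms] by blast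
  show ?thesis
  proof (rule algebraic_int_if_stable_int_span[OF U(1,2) one_neq_zero])
    fix u assume "u \<in> U"
    have "(y * u) * x \<in> int_span U"
      by (rule int_span_mult[OF U(1) U(4)[OF \<open>u \<in> U\<close>]]) (use U(3) in \<open>auto simp: mult.commute\<close>)
    thus "x * y * u \<in> int_span U" by (simp add: mult_ac)
  qed
qed

lemma algebraic_int_sum:
  "(\<And>i. i \<in> I \<Longrightarrow> algebraic_int (f i :: 'a :: field_char_0)) \<Longrightarrow> algebraic_int (sum f I)"
  by (induction I rule: infinite_finite_induct) (auto intro: algebraic_int_add)

lemma algebraic_int_power: "algebraic_int (x :: 'a :: field_char_0) \<Longrightarrow> algebraic_int (x ^ n)"
  by (induction n) (auto intro: algebraic_int_mult)

lemma algebraic_int_root_of_unity: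
  fixes z :: "'a :: field_char_0"
  assumes "z ^ N = 1" "N > 0"
  shows "algebraic_int z"
proof (rule algebraic_int_root[of 1 "monom 1 N"])
  show "poly (monom 1 N) z = 1" using assms by (simp add: poly_monom)
qed (use assms in \<open>auto simp: coeff_monom degree_monom_eq\<close>)

section \<open>Roots of unity of order \<open>2\<^sup>m\<close>\<close>

lemma one_add_odd_power:
  fixes z :: "'a :: comm_ring_1"
  assumes "odd j"
  shows "1 + z ^ j = (1 + z) * (\<Sum>i<j. (- z) ^ i)"
  using one_diff_power_eq[of "- z" j] assms by simp

lemma two_add_inverse_eq:
  fixes z :: "'a :: field"
  assumes "z \<noteq> 0"
  shows "2 + z + inverse z = (1 + z) * (1 + inverse z)"
  using assms by (simp add: algebra_simps)

lemma two_add_inverse_nonzero: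
  fixes z :: "'a :: field"
  assumes "z \<noteq> 0" "z \<noteq> -1"
  shows "2 + z + inverse z \<noteq> 0"
proof -
  have "1 + z \<noteq> 0" "1 + inverse z \<noteq> 0"
    using assms by (auto simp: add_eq_0_iff inverse_eq_iff_eq[of z "-1", simplified])
  thus ?thesis using two_add_inverse_eq[OF assms(1)] by simp
qed

lemma algebraic_int_ratio_odd_power:
  fixes z :: "'a :: field_char_0"
  assumes root: "z ^ N = 1" "N > 0" and "odd j" and "z \<noteq> -1"
  shows "algebraic_int ((2 + z ^ j + inverse z ^ j) / (2 + z + inverse z))"
proof -
  have "z \<noteq> 0" using root by (metis zero_neq_one zero_power)
  define w where "w = inverse z"
  have w: "w ^ N = 1" "z * w = 1" using root \<open>z \<noteq> 0\<close> by (simp_all add: w_def power_inverse)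
  define A where "A = (\<Sum>i<j. (- z) ^ i)"
  define B where "B = (\<Sum>i<j. (- w) ^ i)"
  have "2 + z ^ j + w ^ j = (1 + z ^ j) * (1 + w ^ j)"
    using w(2) by (simp add: algebra_simps power_mult_distrib[symmetric])
  also have "\<dots> = (2 + z + w) * (A * B)"
    unfolding A_def B_def one_add_odd_power[OF \<open>odd j\<close>] w_def two_add_inverse_eq[OF \<open>z \<noteq> 0\<close>]
    by (simp add: mult_ac)
  finally have "(2 + z ^ j + w ^ j) / (2 + z + w) = A * B"
    using two_add_inverse_nonzero[OF \<open>z \<noteq> 0\<close> \<open>z \<noteq> -1\<close>] unfolding w_def by simp
  moreover have "algebraic_int (- z)" "algebraic_int (- w)"
    using algebraic_int_root_of_unity[OF root] algebraic_int_root_of_unity[OF w(1) root(2)] by auto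
  hence "algebraic_int (A * B)"
    unfolding A_def B_def by (intro algebraic_int_mult algebraic_int_sum algebraic_int_power)
  ultimately show ?thesis unfolding w_def by (simp add: power_inverse)
qed

lemma primitive_root_2pow_odd_powers:
  fixes \<zeta> :: complex
  assumes m: "m \<ge> 2" and \<zeta>: "primitive_root_of_unity (2 ^ m) \<zeta>"
  defines "\<omega> \<equiv> exp (2 * of_real pi * \<i> / 2 ^ m)"
  obtains k j where "odd k" "odd j" "\<zeta> = \<omega> ^ k" "\<omega> = \<zeta> ^ j" "\<omega> ^ (2 ^ m) = 1"
proof -
  obtain m1 where m1: "m = Suc m1" "m1 \<ge> 1" using m by (cases m) auto
  define N :: nat where "N = 2 ^ m"
  have N2: "N = 2 * 2 ^ m1" unfolding N_def m1 by simp
  have N: "N > 0" "N \<ge> 4" unfolding N_def using power_increasing[OF m, of "2::nat"] by simp_all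
  have \<omega>: "\<omega> = cis (2 * pi / real N)"
    unfolding \<omega>_def cis_conv_exp N_def by (simp add: field_simps)
  have "\<zeta> \<in> {z. z ^ N = 1}" using \<zeta> unfolding primitive_root_of_unity_def N_def by simp
  then obtain k where k: "k < N" "\<zeta> = cis (2 * pi * real k / real N)"
    using Complex.bij_betw_roots_unity[OF N(1)] unfolding bij_betw_def by auto
  have \<zeta>k: "\<zeta> = \<omega> ^ k" unfolding k(2) \<omega> Complex.DeMoivre by (simp add: field_simps)
  have \<omega>N: "\<omega> ^ N = 1" unfolding \<omega> Complex.DeMoivre using N by simp
  have "odd k"
  proof
    assume "even k"
    then obtain k' where k': "k = 2 * k'" by blast
    have "\<zeta> ^ (2 ^ m1) = \<omega> ^ (N * k')" unfolding \<zeta>k k' N2 by (simp add: power_mult mult_ac)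
    also have "\<dots> = 1" unfolding power_mult \<omega>N by simp
    finally have "\<zeta> ^ (2 ^ m1) = 1" .
    moreover have "0 < (2::nat) ^ m1" "(2::nat) ^ m1 < 2 ^ m" using m1 by auto
    ultimately show False using \<zeta> unfolding primitive_root_of_unity_def by blast
  qed
  hence "coprime k N" unfolding N_def by simp
  then obtain j where "[k * j = Suc 0] (mod N)" using cong_solve_coprime_nat by blast
  hence "k * j mod N = 1" using N unfolding cong_def by simp
  hence kj: "k * j = N * (k * j div N) + 1" by (metis div_mult_mod_eq add.commute mult.commute)
  have "\<zeta> ^ j = \<omega> ^ (k * j)" unfolding \<zeta>k by (simp add: power_mult)
  also have "\<dots> = \<omega>" by (subst kj) (simp add: power_add power_mult \<omega>N)
  finally have "\<omega> = \<zeta> ^ j" by simp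
  moreover have "odd (k * j)" by (subst kj) (simp add: N2)
  hence "odd j" by simp
  ultimately show ?thesis using that \<open>odd k\<close> \<zeta>k \<omega>N unfolding N_def by blast
qed

lemma primitive_root_2pow_ne:
  fixes \<zeta> :: complex
  assumes m: "m \<ge> 2" and \<zeta>: "primitive_root_of_unity (2 ^ m) \<zeta>"
  shows "\<zeta> \<noteq> 0" "\<zeta> \<noteq> -1"
proof -
  have \<zeta>_root: "\<zeta> ^ (2 ^ m) = 1" using \<zeta> unfolding primitive_root_of_unity_def by simp
  show "\<zeta> \<noteq> 0"
  proof
    assume "\<zeta> = 0"
    thus False using \<zeta>_root zero_power[of "2 ^ m", where 'a = complex] by simp
  qed
  show "\<zeta> \<noteq> -1"
  proof
    assume "\<zeta> = -1"
    have "(2::nat) < 2 ^ m" using power_strict_increasing[of 1 m "2::nat"] m by simp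
    hence "\<zeta> ^ 2 \<noteq> 1" using \<zeta> unfolding primitive_root_of_unity_def by simp
    thus False using \<open>\<zeta> = -1\<close> by simp
  qed
qed

text \<open>\<open>\<pi>\<^sub>m\<close> and \<open>2 + \<zeta> + \<zeta>\<^sup>-\<^sup>1\<close> are the norms of \<open>1 + \<omega>\<close> and \<open>1 + \<zeta>\<close> for two primitive
  \<open>2\<^sup>m\<close>-th roots of unity, each an odd power of the other; hence they are associates.\<close>
lemma pi_n_associate:
  fixes \<zeta> :: complex
  assumes m: "m \<ge> 2" and \<zeta>: "primitive_root_of_unity (2 ^ m) \<zeta>"
  obtains j where "pi_n m = 2 + \<zeta> ^ j + inverse \<zeta> ^ j" "pi_n m \<noteq> 0"
    "algebraic_int (pi_n m / (2 + \<zeta> + inverse \<zeta>))"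
    "algebraic_int ((2 + \<zeta> + inverse \<zeta>) / pi_n m)"
proof -
  define \<omega> where "\<omega> = exp (2 * of_real pi * \<i> / 2 ^ m)"
  obtain k j where kj: "odd k" "odd j" "\<zeta> = \<omega> ^ k" "\<omega> = \<zeta> ^ j" "\<omega> ^ (2 ^ m) = 1"
    using primitive_root_2pow_odd_powers[OF m \<zeta>] unfolding \<omega>_def by blast
  have \<zeta>_root: "\<zeta> ^ (2 ^ m) = 1" using \<zeta> unfolding primitive_root_of_unity_def by simp
  note \<zeta>_ne = primitive_root_2pow_ne[OF m \<zeta>]
  have "\<omega> \<noteq> 0" unfolding \<omega>_def by simp
  have "\<omega> \<noteq> -1"
  proof
    assume "\<omega> = -1"
    hence "\<zeta> = -1" using kj(1,3) by simp
    thus False using \<zeta>_ne(2) by simp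
  qed
  have pi: "pi_n m = 2 + \<omega> + inverse \<omega>" unfolding pi_n_def \<omega>_def ..
  show ?thesis
  proof
    show "pi_n m = 2 + \<zeta> ^ j + inverse \<zeta> ^ j" unfolding pi kj(4) by (simp add: power_inverse)
    show "pi_n m \<noteq> 0" unfolding pi by (rule two_add_inverse_nonzero[OF \<open>\<omega> \<noteq> 0\<close> \<open>\<omega> \<noteq> -1\<close>])
    show "algebraic_int (pi_n m / (2 + \<zeta> + inverse \<zeta>))"
      using algebraic_int_ratio_odd_power[OF \<zeta>_root _ kj(2) \<zeta>_ne(2)]
      unfolding pi kj(4) by (simp add: power_inverse)
    show "algebraic_int ((2 + \<zeta> + inverse \<zeta>) / pi_n m)"
      using algebraic_int_ratio_odd_power[OF kj(5) _ kj(1) \<open>\<omega> \<noteq> -1\<close>]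
      unfolding pi kj(3) by (simp add: power_inverse)
  qed
qed

section \<open>Products of ideals\<close>

lemma sum_lessThan_add:
  "(\<Sum>i<n + m. f i) = (\<Sum>i<n. f i) + (\<Sum>i<m. f (n + i))"
  for n m :: nat and f :: "nat \<Rightarrow> 'a :: comm_monoid_add"
  by (induction m) (auto simp: add.assoc)

lemma sum_square_diagonal_pairs:
  "(\<Sum>i<n. \<Sum>j<n. P i j) = (\<Sum>i<n. P i i + (\<Sum>j<i. P i j + P j i))"
  for P :: "nat \<Rightarrow> nat \<Rightarrow> 'a :: comm_monoid_add"
proof (induction n)
  case (Suc n)
  have "(\<Sum>i<Suc n. \<Sum>j<Suc n. P i j)
      = (\<Sum>i<n. \<Sum>j<n. P i j) + ((\<Sum>i<n. P i n) + (\<Sum>j<n. P n j) + P n n)"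
    by (simp add: sum.distrib add_ac)
  also have "\<dots> = (\<Sum>i<Suc n. P i i + (\<Sum>j<i. P i j + P j i))"
    using Suc by (simp add: sum.distrib add_ac)
  finally show ?case .
qed simp

lemma ideal_multI:
  "(\<forall>i<n. a i \<in> A \<and> b i \<in> B) \<Longrightarrow> z = (\<Sum>i<n. a i * b i) \<Longrightarrow> z \<in> ideal_mult A B"
  for n :: nat
  unfolding ideal_mult_def by blast

lemma ideal_multE:
  assumes "z \<in> ideal_mult A B"
  obtains n :: nat and a b where "\<forall>i<n. a i \<in> A \<and> b i \<in> B" "z = (\<Sum>i<n. a i * b i)"
  using assms unfolding ideal_mult_def by blast

lemma ideal_mult_zero: "0 \<in> ideal_mult A B"
  by (rule ideal_multI[of 0]) auto

lemma ideal_mult_mult: "a \<in> A \<Longrightarrow> b \<in> B \<Longrightarrow> a * b \<in> ideal_mult A B"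
  by (rule ideal_multI[of 1 "\<lambda>_. a" _ "\<lambda>_. b"]) auto

lemma ideal_mult_add:
  assumes "z \<in> ideal_mult A B" "w \<in> ideal_mult A B"
  shows "z + w \<in> ideal_mult A B"
proof -
  obtain n :: nat and a b where z: "\<forall>i<n. a i \<in> A \<and> b i \<in> B" "z = (\<Sum>i<n. a i * b i)"
    using assms(1) by (rule ideal_multE)
  obtain m :: nat and a' b' where w: "\<forall>i<m. a' i \<in> A \<and> b' i \<in> B" "w = (\<Sum>i<m. a' i * b' i)"
    using assms(2) by (rule ideal_multE)
  define a'' where "a'' i = (if i < n then a i else a' (i - n))" for i
  define b'' where "b'' i = (if i < n then b i else b' (i - n))" for i
  show ?thesis
  proof (rule ideal_multI[of "n + m" a'' _ b''])
    show "\<forall>i<n + m. a'' i \<in> A \<and> b'' i \<in> B"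
      using z w unfolding a''_def b''_def by auto
    show "z + w = (\<Sum>i<n + m. a'' i * b'' i)"
      unfolding sum_lessThan_add z w a''_def b''_def by simp
  qed
qed

lemma ideal_mult_sum:
  "(\<And>i. i \<in> I \<Longrightarrow> f i \<in> ideal_mult A B) \<Longrightarrow> sum f I \<in> ideal_mult A B"
  by (induction I rule: infinite_finite_induct) (auto intro: ideal_mult_zero ideal_mult_add)

lemma ideal_mult_left_mult:
  assumes "\<And>x. x \<in> A \<Longrightarrow> r * x \<in> A" "z \<in> ideal_mult A B"
  shows "r * z \<in> ideal_mult A B"
proof -
  obtain n :: nat and a b where z: "\<forall>i<n. a i \<in> A \<and> b i \<in> B" "z = (\<Sum>i<n. a i * b i)"
    using assms(2) by (rule ideal_multE)
  show ?thesis
    by (rule ideal_multI[of n "\<lambda>i. r * a i" _ b]) (use z assms(1) in \<open>auto simp: sum_distrib_left mult.assoc\<close>)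
qed

section \<open>Number fields\<close>

locale complex_subfield =
  fixes K :: "complex set"
  assumes subfield: "is_subfield K"
begin

lemma zero_mem: "0 \<in> K" and one_mem: "1 \<in> K"
  using subfield unfolding is_subfield_def by auto

lemma add_mem: "x \<in> K \<Longrightarrow> y \<in> K \<Longrightarrow> x + y \<in> K"
  and diff_mem: "x \<in> K \<Longrightarrow> y \<in> K \<Longrightarrow> x - y \<in> K"
  and mult_mem: "x \<in> K \<Longrightarrow> y \<in> K \<Longrightarrow> x * y \<in> K"
  using subfield unfolding is_subfield_def by auto

lemma inverse_mem: "x \<in> K \<Longrightarrow> inverse x \<in> K"
  using subfield zero_mem unfolding is_subfield_def by (cases "x = 0") auto

lemma divide_mem: "x \<in> K \<Longrightarrow> y \<in> K \<Longrightarrow> x / y \<in> K"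
  by (simp add: divide_inverse mult_mem inverse_mem)

lemma uminus_mem: "x \<in> K \<Longrightarrow> - x \<in> K"
  using diff_mem[OF zero_mem] by simp

lemma of_nat_mem: "of_nat n \<in> K"
  by (induction n) (auto intro: zero_mem one_mem add_mem)

lemma of_int_mem: "of_int n \<in> K"
  by (cases n rule: int_cases) (auto intro: of_nat_mem uminus_mem simp del: of_nat_Suc)

lemma Ints_mem: "x \<in> \<int> \<Longrightarrow> x \<in> K"
  by (auto elim!: Ints_cases intro: of_int_mem)

lemma sum_mem: "(\<And>i. i \<in> I \<Longrightarrow> f i \<in> K) \<Longrightarrow> sum f I \<in> K"
  by (induction I rule: infinite_finite_induct) (auto intro: zero_mem add_mem)

text \<open>The sequence \<open>z ^ n + z ^ -n\<close> satisfies the Chebyshev recursion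
  \<open>X (n + 2) = X 1 * X (n + 1) - X n\<close>.\<close>
lemma power_add_inverse_power_mem:
  assumes "z \<noteq> 0" and "z + inverse z \<in> K"
  shows "z ^ n + inverse z ^ n \<in> K"
proof -
  define X where "X n = z ^ n + inverse z ^ n" for n
  have rec: "X (Suc (Suc n)) = X 1 * X (Suc n) - X n" for n
  proof -
    have a: "z * inverse z ^ Suc n = inverse z ^ n" and b: "inverse z * z ^ Suc n = z ^ n"
      using assms(1) by (simp_all add: mult.assoc[symmetric])
    have "X 1 * X (Suc n) = z * z ^ Suc n + z * inverse z ^ Suc n
        + inverse z * z ^ Suc n + inverse z * inverse z ^ Suc n"
      unfolding X_def by (simp add: algebra_simps)
    also have "\<dots> = X (Suc (Suc n)) + X n" unfolding a b X_def by simp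
    finally show ?thesis by simp
  qed
  have "X n \<in> K \<and> X (Suc n) \<in> K"
  proof (induction n)
    case 0
    show ?case using assms(2) of_nat_mem[of 2] unfolding X_def by simp
  next
    case (Suc n)
    have "X 1 \<in> K" using assms(2) unfolding X_def by simp
    thus ?case using Suc rec[of n] diff_mem mult_mem by simp
  qed
  thus ?thesis unfolding X_def by simp
qed

end

lemma ring_of_integers_iff: "x \<in> ring_of_integers F \<longleftrightarrow> x \<in> F \<and> algebraic_int x"
  unfolding ring_of_integers_def by simp

lemma rat_common_denominator:
  fixes f :: "'a \<Rightarrow> rat"
  assumes "finite A"
  shows "\<exists>D::int. D > 0 \<and> (\<forall>a\<in>A. of_int D * f a \<in> \<int>)"
  using assms
proof (induction A rule: finite_induct)
  case (insert a A)
  then obtain D where D: "D > 0" "\<forall>a\<in>A. of_int D * f a \<in> \<int>" by blast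
  obtain num den where q: "quotient_of (f a) = (num, den)" by fastforce
  have den: "den > 0" and fa: "f a = of_int num / of_int den"
    using quotient_of_denom_pos[OF q] quotient_of_div[OF q] by simp_all
  have "of_int (D * den) * f a' \<in> \<int>" if "a' \<in> insert a A" for a'
  proof (cases "a' = a")
    case True
    thus ?thesis using den by (simp add: fa)
  next
    case False
    hence "of_int den * (of_int D * f a') \<in> \<int>" using that D(2) by simp
    thus ?thesis by (simp add: mult_ac)
  qed
  thus ?case using D(1) den by (intro exI[of _ "D * den"]) simp
qed (rule exI[of _ 1], simp)

text \<open>Multiplication by \<open>D * x\<close> maps the \<open>\<int>\<close>-span of a \<open>\<rat>\<close>-basis of \<open>K\<close> into itself once
  \<open>D\<close> clears the denominators of the matrix of multiplication by \<open>x\<close>.\<close>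
lemma number_field_int_denominator:
  assumes K: "number_field K" and "x \<in> K"
  obtains D :: int where "D > 0" "algebraic_int (of_int D * x)"
proof -
  interpret complex_subfield K using K unfolding number_field_def by unfold_locales simp
  obtain B where B: "finite B" "\<forall>y\<in>K. \<exists>c. y = (\<Sum>b\<in>B. of_rat (c b) * b)" "B \<subseteq> K"
    using K unfolding number_field_def by blast
  have "\<exists>c. x * b = (\<Sum>b'\<in>B. of_rat (c b') * b')" if "b \<in> B" for b
  proof -
    have "x * b \<in> K" using that B(3) \<open>x \<in> K\<close> by (auto intro: mult_mem)
    thus ?thesis using B(2) by blast
  qed
  then obtain C where C: "\<And>b. b \<in> B \<Longrightarrow> x * b = (\<Sum>b'\<in>B. of_rat (C b b') * b')" by metis
  obtain D :: int where D: "D > 0" "\<forall>(b, b')\<in>B \<times> B. of_int D * C b b' \<in> \<int>"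
    using rat_common_denominator[of "B \<times> B" "\<lambda>(b, b'). C b b'"] B(1) by auto
  define e where "e b b' = (SOME n::int. of_int D * C b b' = of_int n)" for b b'
  have e: "of_int D * C b b' = of_int (e b b')" if "b \<in> B" "b' \<in> B" for b b'
  proof -
    have "\<exists>n::int. of_int D * C b b' = of_int n" using D(2) that by (auto elim!: Ints_cases)
    thus ?thesis unfolding e_def by (rule someI_ex)
  qed
  have stable: "(of_int D * x) * b \<in> int_span B" if b: "b \<in> B" for b
  proof (rule int_spanI)
    have "(of_int D * x) * b = (\<Sum>b'\<in>B. of_rat (of_int D * C b b') * b')"
      using C[OF b] by (simp add: sum_distrib_left mult.assoc of_rat_mult)
    also have "\<dots> = (\<Sum>b'\<in>B. of_int (e b b') * b')"
      using e[OF b] by (intro sum.cong) simp_all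
    finally show "(of_int D * x) * b = (\<Sum>b'\<in>B. of_int (e b b') * b')" .
  qed
  obtain c where c: "1 = (\<Sum>b\<in>B. of_rat (c b) * b)" using B(2) one_mem by blast
  have "\<exists>b\<in>B. b \<noteq> 0"
  proof (rule ccontr)
    assume "\<not> (\<exists>b\<in>B. b \<noteq> 0)"
    hence "(\<Sum>b\<in>B. of_rat (c b) * b) = 0" by (intro sum.neutral) auto
    thus False using c by simp
  qed
  then obtain b where "b \<in> B" "b \<noteq> 0" by blast
  show ?thesis by (rule that[OF D(1) algebraic_int_if_stable_int_span[OF B(1) \<open>b \<in> B\<close> \<open>b \<noteq> 0\<close> stable]])
qed

section \<open>Quadratic extensions\<close>

locale quadratic_extension =
  fixes K :: "complex set" and p s :: complex
  assumes number_field: "number_field K" and p_mem: "p \<in> K"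
    and not_square: "\<not> (\<exists>x\<in>K. x ^ 2 = p)" and sqrt: "s ^ 2 = p"
begin

sublocale complex_subfield K
  using number_field unfolding number_field_def by unfold_locales simp

abbreviation "L \<equiv> quad_ext K s"
abbreviation "O\<^sub>K \<equiv> ring_of_integers K"
abbreviation "O\<^sub>L \<equiv> ring_of_integers L"
abbreviation "\<sigma> \<equiv> quad_conj K s"

lemma s_not_mem: "s \<notin> K"
  using not_square sqrt by blast

lemma s_nonzero: "s \<noteq> 0"
  using s_not_mem zero_mem by auto

lemma s_mult_self: "s * s = p"
  using sqrt by (simp add: power2_eq_square)

lemma p_nonzero: "p \<noteq> 0"
  using s_mult_self s_nonzero by auto

lemma quad_ext_coords_unique:
  assumes "a \<in> K" "b \<in> K" "a' \<in> K" "b' \<in> K" "a + b * s = a' + b' * s"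
  shows "a = a' \<and> b = b'"
proof (cases "b = b'")
  case False
  have "s = (a - a') / (b' - b)"
    using assms(5) False by (simp add: field_simps)
  hence "s \<in> K" using assms by (simp add: divide_mem diff_mem)
  thus ?thesis using s_not_mem by simp
qed (use assms in simp)

lemma quad_conj_eq:
  assumes "a \<in> K" "b \<in> K"
  shows "\<sigma> (a + b * s) = a - b * s"
  unfolding quad_conj_def
proof (rule the_equality)
  fix y assume "\<exists>a'\<in>K. \<exists>b'\<in>K. a + b * s = a' + b' * s \<and> y = a' - b' * s"
  then obtain a' b' where "a' \<in> K" "b' \<in> K" "a + b * s = a' + b' * s" "y = a' - b' * s" by blast
  thus "y = a - b * s" using quad_ext_coords_unique[OF assms \<open>a' \<in> K\<close> \<open>b' \<in> K\<close>] by simp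
qed (use assms in blast)

lemma quad_extI: "a \<in> K \<Longrightarrow> b \<in> K \<Longrightarrow> a + b * s \<in> L"
  unfolding quad_ext_def by blast

lemma quad_extE:
  assumes "x \<in> L"
  obtains a b where "a \<in> K" "b \<in> K" "x = a + b * s"
  using assms unfolding quad_ext_def by blast

lemma quad_ext_of_mem: "x \<in> K \<Longrightarrow> x \<in> L"
  using quad_extI[of x 0] zero_mem by simp

lemma quad_conj_of_mem: "x \<in> K \<Longrightarrow> \<sigma> x = x"
  using quad_conj_eq[of x 0] zero_mem by simp

lemma quad_conj_coords:
  assumes "y \<in> L"
  obtains a b where "a \<in> K" "b \<in> K" "y = a + b * s" "\<sigma> y = a - b * s"
  using assms quad_conj_eq by (metis quad_extE)

lemma quad_ext_add: "x \<in> L \<Longrightarrow> y \<in> L \<Longrightarrow> x + y \<in> L"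
  and quad_conj_add: "x \<in> L \<Longrightarrow> y \<in> L \<Longrightarrow> \<sigma> (x + y) = \<sigma> x + \<sigma> y"
proof -
  assume "x \<in> L" "y \<in> L"
  then obtain a b c d where x: "a \<in> K" "b \<in> K" "x = a + b * s" "\<sigma> x = a - b * s"
    and y: "c \<in> K" "d \<in> K" "y = c + d * s" "\<sigma> y = c - d * s"
    by (metis quad_conj_coords)
  have xy: "x + y = (a + c) + (b + d) * s" unfolding x(3) y(3) by (simp add: algebra_simps)
  have K: "a + c \<in> K" "b + d \<in> K" using x y by (auto intro: add_mem)
  show "x + y \<in> L" unfolding xy using K by (rule quad_extI)
  have "\<sigma> (x + y) = (a + c) - (b + d) * s" unfolding xy by (rule quad_conj_eq[OF K])
  thus "\<sigma> (x + y) = \<sigma> x + \<sigma> y" unfolding x(4) y(4) by (simp add: algebra_simps)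
qed

lemma quad_ext_mult: "x \<in> L \<Longrightarrow> y \<in> L \<Longrightarrow> x * y \<in> L"
  and quad_conj_mult: "x \<in> L \<Longrightarrow> y \<in> L \<Longrightarrow> \<sigma> (x * y) = \<sigma> x * \<sigma> y"
proof -
  assume "x \<in> L" "y \<in> L"
  then obtain a b c d where x: "a \<in> K" "b \<in> K" "x = a + b * s" "\<sigma> x = a - b * s"
    and y: "c \<in> K" "d \<in> K" "y = c + d * s" "\<sigma> y = c - d * s"
    by (metis quad_conj_coords)
  have xy: "x * y = (a * c + b * d * p) + (a * d + b * c) * s"
    unfolding x(3) y(3) by (simp add: algebra_simps flip: s_mult_self)
  have K: "a * c + b * d * p \<in> K" "a * d + b * c \<in> K"
    using x y p_mem by (auto intro!: add_mem mult_mem)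
  show "x * y \<in> L" unfolding xy using K by (rule quad_extI)
  have "\<sigma> (x * y) = (a * c + b * d * p) - (a * d + b * c) * s" unfolding xy by (rule quad_conj_eq[OF K])
  thus "\<sigma> (x * y) = \<sigma> x * \<sigma> y" unfolding x(4) y(4) by (simp add: algebra_simps flip: s_mult_self)
qed

lemma quad_ext_sum: "(\<And>i. i \<in> I \<Longrightarrow> f i \<in> L) \<Longrightarrow> sum f I \<in> L"
  by (induction I rule: infinite_finite_induct) (auto simp: quad_ext_of_mem zero_mem quad_ext_add)

lemma quad_conj_sum: "(\<And>i. i \<in> I \<Longrightarrow> f i \<in> L) \<Longrightarrow> \<sigma> (sum f I) = (\<Sum>i\<in>I. \<sigma> (f i))"
  by (induction I rule: infinite_finite_induct)
    (auto simp: zero_mem quad_conj_of_mem quad_ext_sum quad_conj_add)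

lemma quad_ext_power: "x \<in> L \<Longrightarrow> x ^ n \<in> L"
  by (induction n) (auto simp: quad_ext_of_mem one_mem quad_ext_mult)

lemma quad_conj_power: "x \<in> L \<Longrightarrow> \<sigma> (x ^ n) = \<sigma> x ^ n"
  by (induction n) (auto simp: one_mem quad_conj_of_mem quad_ext_power quad_conj_mult)

lemma quad_conj_mult_mem: "c \<in> K \<Longrightarrow> x \<in> L \<Longrightarrow> \<sigma> (c * x) = c * \<sigma> x"
  using quad_conj_mult quad_conj_of_mem quad_ext_of_mem by simp

lemma algebraic_int_quad_conj:
  assumes "x \<in> L" "algebraic_int x"
  shows "algebraic_int (\<sigma> x)"
proof -
  obtain P where P: "lead_coeff P = 1" "\<forall>i. coeff P i \<in> \<int>" "poly P x = 0"
    using assms(2) by (auto simp: algebraic_int.simps)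
  have coeff: "coeff P i \<in> K" for i using P(2) Ints_mem by blast
  have term_mem: "coeff P i * x ^ i \<in> L" for i
    using quad_ext_mult[OF quad_ext_of_mem[OF coeff] quad_ext_power[OF assms(1)]] .
  have "poly P (\<sigma> x) = (\<Sum>i\<le>degree P. \<sigma> (coeff P i * x ^ i))"
    unfolding poly_altdef
    using quad_conj_mult_mem[OF coeff quad_ext_power[OF assms(1)]] quad_conj_power[OF assms(1)]
    by simp
  also have "\<dots> = \<sigma> (poly P x)"
    unfolding poly_altdef by (rule quad_conj_sum[symmetric]) (rule term_mem)
  finally have "poly P (\<sigma> x) = 0" using P(3) quad_conj_of_mem[OF zero_mem] by simp
  thus ?thesis using P by (intro algebraic_int.intros[of P]) auto
qed

lemma quad_trace_form_mem:
  assumes "y \<in> L" "z \<in> L"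
  shows "y * \<sigma> z + z * \<sigma> y \<in> K"
proof -
  obtain a b where y: "a \<in> K" "b \<in> K" "y = a + b * s" "\<sigma> y = a - b * s"
    using assms(1) by (rule quad_conj_coords)
  obtain c d where z: "c \<in> K" "d \<in> K" "z = c + d * s" "\<sigma> z = c - d * s"
    using assms(2) by (rule quad_conj_coords)
  have "y * \<sigma> z + z * \<sigma> y = 2 * (a * c - b * d * p)"
    unfolding y(4) z(4) unfolding y(3) z(3) by (simp add: algebra_simps flip: s_mult_self)
  thus ?thesis using y z p_mem of_nat_mem[of 2] by (simp add: mult_mem diff_mem)
qed

lemma quad_norm_mem:
  assumes "y \<in> L"
  shows "y * \<sigma> y \<in> K"
proof -
  obtain a b where y: "a \<in> K" "b \<in> K" "y = a + b * s" "\<sigma> y = a - b * s"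
    using assms by (rule quad_conj_coords)
  have "y * \<sigma> y = a * a - b * b * p"
    unfolding y(4) unfolding y(3) by (simp add: algebra_simps flip: s_mult_self)
  thus ?thesis using y p_mem by (simp add: mult_mem diff_mem)
qed

lemma quad_trace_mem:
  assumes "y \<in> L"
  shows "y + \<sigma> y \<in> K"
proof -
  obtain a b where y: "a \<in> K" "b \<in> K" "y = a + b * s" "\<sigma> y = a - b * s"
    using assms by (rule quad_conj_coords)
  have "y + \<sigma> y = a + a" unfolding y(4) unfolding y(3) by simp
  thus ?thesis using add_mem[OF y(1) y(1)] by (simp only:)
qed

lemma quad_trace_form_integral:
  assumes "y \<in> O\<^sub>L" "z \<in> O\<^sub>L"
  shows "y * \<sigma> z + z * \<sigma> y \<in> O\<^sub>K"
proof -
  have "y \<in> L" "z \<in> L" "algebraic_int y" "algebraic_int z"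
    using assms by (simp_all add: ring_of_integers_iff)
  hence "algebraic_int (y * \<sigma> z + z * \<sigma> y)"
    by (intro algebraic_int_add algebraic_int_mult algebraic_int_quad_conj)
  thus ?thesis
    using quad_trace_form_mem[OF \<open>y \<in> L\<close> \<open>z \<in> L\<close>] by (simp add: ring_of_integers_iff)
qed

lemma quad_norm_integral:
  assumes "y \<in> O\<^sub>L"
  shows "y * \<sigma> y \<in> O\<^sub>K"
proof -
  have "y \<in> L" "algebraic_int y" using assms by (simp_all add: ring_of_integers_iff)
  hence "algebraic_int (y * \<sigma> y)" by (intro algebraic_int_mult algebraic_int_quad_conj)
  thus ?thesis using quad_norm_mem[OF \<open>y \<in> L\<close>] by (simp add: ring_of_integers_iff)
qed

end

section \<open>Squares of the ideals \<open>c\<bb>\<close>\<close>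

locale principal_extension = quadratic_extension +
  fixes \<bb> :: "complex set" and \<beta> :: complex
  assumes ideal: "is_ideal (ring_of_integers K) \<bb>" and ideal_nonzero: "\<bb> \<noteq> {0}"
    and \<beta>_mem: "\<beta> \<in> quad_ext K s"
    and extension: "ideal_mult \<bb> (ring_of_integers (quad_ext K s))
                    = principal_ideal \<beta> (ring_of_integers (quad_ext K s))"
begin

lemma ideal_mem_integral: "b \<in> \<bb> \<Longrightarrow> b \<in> O\<^sub>K"
  using ideal unfolding is_ideal_def by blast

lemma ideal_mem_multiple:
  assumes "b \<in> \<bb>"
  obtains y where "y \<in> O\<^sub>L" "b = \<beta> * y"
proof -
  have "1 \<in> O\<^sub>L" using quad_ext_of_mem[OF one_mem] by (simp add: ring_of_integers_iff)
  hence "b \<in> ideal_mult \<bb> O\<^sub>L" using ideal_mult_mult[OF assms] by fastforce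
  thus ?thesis using that extension unfolding principal_ideal_def by auto
qed

lemma generator_combination:
  obtains n :: nat and a y where "\<forall>i<n. a i \<in> \<bb> \<and> y i \<in> O\<^sub>L" "\<beta> = (\<Sum>i<n. a i * y i)"
proof -
  have "1 \<in> O\<^sub>L" using quad_ext_of_mem[OF one_mem] by (simp add: ring_of_integers_iff)
  hence "\<beta> \<in> ideal_mult \<bb> O\<^sub>L" using extension unfolding principal_ideal_def by force
  thus ?thesis using that by (rule ideal_multE)
qed

lemma \<beta>_nonzero: "\<beta> \<noteq> 0"
proof
  assume "\<beta> = 0"
  obtain b where "b \<in> \<bb>" "b \<noteq> 0" using ideal_nonzero ideal unfolding is_ideal_def by blast
  thus False using ideal_mem_multiple \<open>\<beta> = 0\<close> by (metis mult_zero_left)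
qed

lemma scaled_ideal_subset: "c \<in> K \<Longrightarrow> (*) c ` \<bb> \<subseteq> K"
  using ideal_mem_integral by (auto simp: ring_of_integers_iff intro: mult_mem)

lemma scaled_ideal_mult_integral:
  "r \<in> O\<^sub>K \<Longrightarrow> x \<in> (*) c ` \<bb> \<Longrightarrow> r * x \<in> (*) c ` \<bb>"
  using ideal unfolding is_ideal_def by (auto simp: mult.left_commute)

lemma fractional_scaled_ideal:
  assumes c: "c \<in> K" "c \<noteq> 0"
  shows "fractional_ideal K ((*) c ` \<bb>)"
  unfolding fractional_ideal_def
proof (intro conjI)
  have \<bb>_mem: "b \<in> K" "algebraic_int b" if "b \<in> \<bb>" for b
    using ideal_mem_integral[OF that] by (simp_all add: ring_of_integers_iff)
  show "(*) c ` \<bb> \<subseteq> K" by (rule scaled_ideal_subset[OF c(1)])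
  show "0 \<in> (*) c ` \<bb>" using ideal unfolding is_ideal_def by force
  obtain b where "b \<in> \<bb>" "b \<noteq> 0" using ideal_nonzero ideal unfolding is_ideal_def by blast
  thus "(*) c ` \<bb> \<noteq> {0}" using c by (metis image_eqI mult_eq_0_iff singletonD)
  show "\<forall>x\<in>(*) c ` \<bb>. \<forall>y\<in>(*) c ` \<bb>. x + y \<in> (*) c ` \<bb>"
    using ideal unfolding is_ideal_def by (auto simp: distrib_left[symmetric])
  show "\<forall>r\<in>O\<^sub>K. \<forall>x\<in>(*) c ` \<bb>. r * x \<in> (*) c ` \<bb>"
    using scaled_ideal_mult_integral by blast
  obtain D :: int where D: "D > 0" "algebraic_int (of_int D * c)"
    using number_field_int_denominator[OF number_field c(1)] .
  have "of_int D * x \<in> O\<^sub>K" if x: "x \<in> (*) c ` \<bb>" for x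
  proof -
    obtain b where b: "b \<in> \<bb>" "x = c * b" using x by blast
    have "of_int D * x = (of_int D * c) * b" unfolding b(2) by (simp add: mult.assoc)
    moreover have "algebraic_int ((of_int D * c) * b)" by (rule algebraic_int_mult[OF D(2) \<bb>_mem(2)[OF b(1)]])
    moreover have "(of_int D * c) * b \<in> K" using b(1) \<bb>_mem c(1) of_int_mem by (simp add: mult_mem)
    ultimately show ?thesis by (simp only: ring_of_integers_iff)
  qed
  moreover have "of_int D \<in> O\<^sub>K" using of_int_mem by (simp add: ring_of_integers_iff)
  ultimately show "\<exists>d\<in>O\<^sub>K. d \<noteq> 0 \<and> (\<forall>x\<in>(*) c ` \<bb>. d * x \<in> O\<^sub>K)"
    using D(1) by (intro bexI[of _ "of_int D"]) auto
qed

lemma scaled_ideal_mem_multiple: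
  assumes "x \<in> (*) c ` \<bb>"
  obtains y where "y \<in> O\<^sub>L" "x = (c * \<beta>) * y"
  using assms ideal_mem_multiple by (metis image_iff mult.assoc)

lemma scaled_ideal_square_subset:
  assumes c: "c \<in> K" and t: "t \<in> K" "t \<noteq> 0" and integral: "algebraic_int ((c * \<beta>) ^ 2 / t)"
  shows "ideal_mult ((*) c ` \<bb>) ((*) c ` \<bb>) \<subseteq> principal_ideal t O\<^sub>K"
proof
  fix z assume "z \<in> ideal_mult ((*) c ` \<bb>) ((*) c ` \<bb>)"
  then obtain n :: nat and A B where AB: "\<forall>i<n. A i \<in> (*) c ` \<bb> \<and> B i \<in> (*) c ` \<bb>"
    "z = (\<Sum>i<n. A i * B i)"
    by (rule ideal_multE)
  have "algebraic_int (A i * B i / t)" if "i < n" for i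
  proof -
    obtain y y' where y: "y \<in> O\<^sub>L" "A i = (c * \<beta>) * y" and y': "y' \<in> O\<^sub>L" "B i = (c * \<beta>) * y'"
      using AB(1) \<open>i < n\<close> scaled_ideal_mem_multiple by metis
    have "A i * B i / t = ((c * \<beta>) ^ 2 / t) * (y * y')"
      unfolding y(2) y'(2) by (simp add: power2_eq_square)
    moreover have "algebraic_int (y * y')"
      using y(1) y'(1) by (simp add: ring_of_integers_iff algebraic_int_mult)
    hence "algebraic_int (((c * \<beta>) ^ 2 / t) * (y * y'))" by (rule algebraic_int_mult[OF integral])
    ultimately show ?thesis by (simp only:)
  qed
  hence "algebraic_int (z / t)"
    unfolding AB(2) sum_divide_distrib by (intro algebraic_int_sum) simp
  moreover have "z \<in> K" using AB scaled_ideal_subset[OF c] by (auto intro!: sum_mem mult_mem)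
  ultimately have "z / t \<in> O\<^sub>K" using t divide_mem by (simp add: ring_of_integers_iff)
  moreover have "z = t * (z / t)" using t by simp
  ultimately show "z \<in> principal_ideal t O\<^sub>K" unfolding principal_ideal_def by (rule rev_image_eqI)
qed

text \<open>The norm of \<open>c \<beta> = \<Sum> \<alpha>\<^sub>i y\<^sub>i\<close> with \<open>\<alpha>\<^sub>i \<in> c \<bb>\<close> is
  \<open>\<Sum>\<^sub>i \<alpha>\<^sub>i\<^sup>2 N(y\<^sub>i) + \<Sum>\<^sub>j\<^sub><\<^sub>i \<alpha>\<^sub>i \<alpha>\<^sub>j Tr(y\<^sub>i \<sigma>(y\<^sub>j))\<close>, whose coefficients lie in \<open>O\<^sub>K\<close>.\<close>
lemma norm_mem_scaled_ideal_square:
  assumes c: "c \<in> K" and u: "u \<in> O\<^sub>K"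
  shows "u * ((c * \<beta>) * \<sigma> (c * \<beta>)) \<in> ideal_mult ((*) c ` \<bb>) ((*) c ` \<bb>)"
    (is "_ \<in> ?JJ")
proof -
  obtain n :: nat and a y where ay: "\<forall>i<n. a i \<in> \<bb> \<and> y i \<in> O\<^sub>L" "\<beta> = (\<Sum>i<n. a i * y i)"
    by (rule generator_combination)
  define \<alpha> where "\<alpha> i = c * a i" for i
  have \<alpha>J: "\<alpha> i \<in> (*) c ` \<bb>" if "i < n" for i using ay that unfolding \<alpha>_def by blast
  have \<alpha>K: "\<alpha> i \<in> K" if "i < n" for i
    using ay that c ideal_mem_integral unfolding \<alpha>_def by (auto simp: ring_of_integers_iff intro: mult_mem)
  have yL: "y i \<in> L" if "i < n" for i using ay that by (simp add: ring_of_integers_iff)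
  have c\<beta>: "c * \<beta> = (\<Sum>i<n. \<alpha> i * y i)"
    unfolding ay(2) \<alpha>_def by (simp add: sum_distrib_left mult.assoc)
  have "\<sigma> (c * \<beta>) = (\<Sum>i<n. \<sigma> (\<alpha> i * y i))"
    unfolding c\<beta> using \<alpha>K yL by (intro quad_conj_sum) (simp add: quad_ext_mult quad_ext_of_mem)
  also have "\<dots> = (\<Sum>i<n. \<alpha> i * \<sigma> (y i))"
    using \<alpha>K yL by (intro sum.cong) (simp_all add: quad_conj_mult_mem)
  finally have \<sigma>c\<beta>: "\<sigma> (c * \<beta>) = (\<Sum>i<n. \<alpha> i * \<sigma> (y i))" .
  define P where "P i j = \<alpha> i * \<alpha> j * (y i * \<sigma> (y j))" for i j
  have "(c * \<beta>) * \<sigma> (c * \<beta>) = (\<Sum>i<n. \<Sum>j<n. P i j)"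
    unfolding \<sigma>c\<beta> unfolding c\<beta> sum_product P_def by (simp add: mult_ac)
  also have "\<dots> = (\<Sum>i<n. P i i + (\<Sum>j<i. P i j + P j i))"
    by (rule sum_square_diagonal_pairs)
  finally have "u * ((c * \<beta>) * \<sigma> (c * \<beta>))
      = (\<Sum>i<n. u * P i i + (\<Sum>j<i. u * (P i j + P j i)))"
    by (simp add: sum_distrib_left distrib_left)
  also have "\<dots> \<in> ?JJ"
  proof (intro ideal_mult_sum ideal_mult_add)
    fix i assume i: "i \<in> {..<n}"
    have "u * P i i = ((u * (y i * \<sigma> (y i))) * \<alpha> i) * \<alpha> i"
      unfolding P_def by (simp add: mult_ac)
    also have "\<dots> \<in> ?JJ"
      using i ay u \<alpha>J scaled_ideal_mult_integral quad_norm_integral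
      by (intro ideal_mult_mult) (auto simp: ring_of_integers_iff algebraic_int_mult mult_mem)
    finally show "u * P i i \<in> ?JJ" .
    fix j assume j: "j \<in> {..<i}"
    have "u * (P i j + P j i) = ((u * (y i * \<sigma> (y j) + y j * \<sigma> (y i))) * \<alpha> i) * \<alpha> j"
      unfolding P_def by (simp add: algebra_simps)
    also have "\<dots> \<in> ?JJ"
      using i j ay u \<alpha>J scaled_ideal_mult_integral quad_trace_form_integral
      by (intro ideal_mult_mult) (auto simp: ring_of_integers_iff algebraic_int_mult mult_mem)
    finally show "u * (P i j + P j i) \<in> ?JJ" .
  qed
  finally show ?thesis .
qed

lemma scaled_ideal_square_eq:
  assumes c: "c \<in> K" "c \<noteq> 0" and t: "t \<in> K" "t \<noteq> 0"
    and integral: "algebraic_int ((c * \<beta>) ^ 2 / t)"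
    and u: "u \<in> O\<^sub>K" "t = u * ((c * \<beta>) * \<sigma> (c * \<beta>))"
  shows "\<exists>J. fractional_ideal K J \<and> ideal_mult J J = principal_ideal t O\<^sub>K"
proof (intro exI conjI)
  show "fractional_ideal K ((*) c ` \<bb>)" by (rule fractional_scaled_ideal[OF c])
  have "principal_ideal t O\<^sub>K \<subseteq> ideal_mult ((*) c ` \<bb>) ((*) c ` \<bb>)"
  proof
    fix z assume "z \<in> principal_ideal t O\<^sub>K"
    then obtain r where "r \<in> O\<^sub>K" "z = r * t" unfolding principal_ideal_def by (auto simp: mult.commute)
    have "r * t \<in> ideal_mult ((*) c ` \<bb>) ((*) c ` \<bb>)"
      unfolding u(2) using scaled_ideal_mult_integral[OF \<open>r \<in> O\<^sub>K\<close>]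
      by (rule ideal_mult_left_mult[OF _ norm_mem_scaled_ideal_square[OF c(1) u(1)]])
    thus "z \<in> ideal_mult ((*) c ` \<bb>) ((*) c ` \<bb>)" using \<open>z = r * t\<close> by simp
  qed
  thus "ideal_mult ((*) c ` \<bb>) ((*) c ` \<bb>) = principal_ideal t O\<^sub>K"
    using scaled_ideal_square_subset[OF c(1) t integral] by blast
qed

lemma square_ideal_if_conj_ratio_minus_one:
  assumes ratio: "\<sigma> \<beta> / \<beta> = -1"
  shows "\<exists>J. fractional_ideal K J \<and> ideal_mult J J = principal_ideal p O\<^sub>K"
proof -
  obtain a b where ab: "a \<in> K" "b \<in> K" "\<beta> = a + b * s" "\<sigma> \<beta> = a - b * s"
    using \<beta>_mem by (rule quad_conj_coords)
  have "\<sigma> \<beta> = - \<beta>" using ratio \<beta>_nonzero by (simp add: divide_eq_eq)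
  hence "a = 0" using ab by (simp add: algebra_simps)
  hence \<beta>: "\<beta> = b * s" using ab by simp
  hence "b \<noteq> 0" using \<beta>_nonzero by auto
  define c where "c = inverse b"
  have c: "c \<in> K" "c \<noteq> 0" unfolding c_def using ab(2) \<open>b \<noteq> 0\<close> by (simp_all add: inverse_mem)
  have c\<beta>: "c * \<beta> = s" unfolding c_def \<beta> using \<open>b \<noteq> 0\<close> by simp
  have "\<sigma> (c * \<beta>) = - s"
    using quad_conj_mult_mem[OF c(1) \<beta>_mem] \<open>\<sigma> \<beta> = - \<beta>\<close> c\<beta> by simp
  hence "p = -1 * ((c * \<beta>) * \<sigma> (c * \<beta>))" using c\<beta> s_mult_self by simp
  moreover have "algebraic_int ((c * \<beta>) ^ 2 / p)" using c\<beta> sqrt p_nonzero by simp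
  moreover have "-1 \<in> O\<^sub>K" using uminus_mem[OF one_mem] by (simp add: ring_of_integers_iff)
  ultimately show ?thesis using scaled_ideal_square_eq[OF c p_mem p_nonzero] by blast
qed

lemma scaling_of_conj_ratio:
  assumes ratio: "\<sigma> \<beta> = \<zeta> * \<beta>" and "\<zeta> \<noteq> 0"
  defines "c \<equiv> (\<beta> + \<sigma> \<beta>) / (\<beta> * \<sigma> \<beta>)"
  shows "c \<in> K" "c * \<beta> = 1 + inverse \<zeta>"
    and "(c * \<beta>) * \<sigma> (c * \<beta>) = 2 + \<zeta> + inverse \<zeta>" "2 + \<zeta> + inverse \<zeta> \<in> K"
proof -
  show cK: "c \<in> K"
    unfolding c_def using divide_mem quad_trace_mem quad_norm_mem \<beta>_mem by blast
  show c\<beta>: "c * \<beta> = 1 + inverse \<zeta>"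
    unfolding c_def ratio using \<beta>_nonzero \<open>\<zeta> \<noteq> 0\<close> by (simp add: field_simps)
  have "\<sigma> (c * \<beta>) = \<zeta> * (c * \<beta>)" using quad_conj_mult_mem[OF cK \<beta>_mem] ratio by simp
  also have "\<dots> = 1 + \<zeta>" using c\<beta> \<open>\<zeta> \<noteq> 0\<close> by (simp add: field_simps)
  finally have "(c * \<beta>) * \<sigma> (c * \<beta>) = (1 + \<zeta>) * (1 + inverse \<zeta>)" using c\<beta> by simp
  thus norm: "(c * \<beta>) * \<sigma> (c * \<beta>) = 2 + \<zeta> + inverse \<zeta>"
    using two_add_inverse_eq[OF \<open>\<zeta> \<noteq> 0\<close>] by simp
  have "(c * \<beta>) * \<sigma> (c * \<beta>) = c * c * (\<beta> * \<sigma> \<beta>)"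
    using quad_conj_mult_mem[OF cK \<beta>_mem] by (simp add: mult_ac)
  thus "2 + \<zeta> + inverse \<zeta> \<in> K"
    unfolding norm using cK quad_norm_mem[OF \<beta>_mem] by (simp add: mult_mem)
qed

lemma square_ideal_if_conj_ratio_root:
  assumes m: "m \<ge> 2" and \<zeta>: "primitive_root_of_unity (2 ^ m) \<zeta>" and ratio: "\<sigma> \<beta> / \<beta> = \<zeta>"
  shows "\<exists>J. fractional_ideal K J \<and> ideal_mult J J = principal_ideal (pi_n m) O\<^sub>K"
proof -
  note \<zeta>_ne = primitive_root_2pow_ne[OF m \<zeta>]
  obtain j where pi: "pi_n m = 2 + \<zeta> ^ j + inverse \<zeta> ^ j" "pi_n m \<noteq> 0"
    and associate: "algebraic_int (pi_n m / (2 + \<zeta> + inverse \<zeta>))"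
      "algebraic_int ((2 + \<zeta> + inverse \<zeta>) / pi_n m)"
    using pi_n_associate[OF m \<zeta>] by blast
  have "\<sigma> \<beta> = \<zeta> * \<beta>" using ratio \<beta>_nonzero by (simp add: divide_eq_eq)
  define c where "c = (\<beta> + \<sigma> \<beta>) / (\<beta> * \<sigma> \<beta>)"
  note scaling = scaling_of_conj_ratio[OF \<open>\<sigma> \<beta> = \<zeta> * \<beta>\<close> \<zeta>_ne(1), folded c_def]
  define t' where "t' = 2 + \<zeta> + inverse \<zeta>"
  have "t' \<noteq> 0" unfolding t'_def by (rule two_add_inverse_nonzero[OF \<zeta>_ne])
  have "c \<noteq> 0" using scaling(3) \<open>t' \<noteq> 0\<close> unfolding t'_def by auto
  have "\<zeta> + inverse \<zeta> \<in> K" using diff_mem[OF scaling(4) of_nat_mem[of 2]] by simp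
  hence "pi_n m \<in> K"
    unfolding pi(1) using add_mem[OF of_nat_mem[of 2] power_add_inverse_power_mem[OF \<zeta>_ne(1)]]
    by (simp add: add.assoc)
  have "pi_n m / t' \<in> O\<^sub>K"
    using associate(1) divide_mem[OF \<open>pi_n m \<in> K\<close> scaling(4)]
    by (simp add: t'_def ring_of_integers_iff)
  moreover have "pi_n m = (pi_n m / t') * ((c * \<beta>) * \<sigma> (c * \<beta>))"
    using scaling(3) \<open>t' \<noteq> 0\<close> by (simp add: t'_def)
  moreover have "algebraic_int ((c * \<beta>) ^ 2 / pi_n m)"
  proof -
    have "(c * \<beta>) ^ 2 = inverse \<zeta> * t'"
      unfolding scaling(2) t'_def using \<zeta>_ne(1) by (simp add: field_simps power2_eq_square)
    hence eq: "(c * \<beta>) ^ 2 / pi_n m = inverse \<zeta> * (t' / pi_n m)" by simp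
    have "algebraic_int (inverse \<zeta>)"
      using algebraic_int_root_of_unity[of "inverse \<zeta>" "2 ^ m"] \<zeta>
      by (simp add: power_inverse primitive_root_of_unity_def)
    thus ?thesis unfolding eq t'_def using associate(2) by (rule algebraic_int_mult)
  qed
  ultimately show ?thesis
    using scaled_ideal_square_eq[OF scaling(1) \<open>c \<noteq> 0\<close> \<open>pi_n m \<in> K\<close> pi(2)] by blast
qed

end

theorem lemma1:
  fixes K :: "complex set" and p s \<beta> :: complex and \<bb> :: "complex set"
  assumes K: "number_field K"
    and pK: "p \<in> K" and nonsq: "\<not> (\<exists>x\<in>K. x ^ 2 = p)"
    and s: "s ^ 2 = p"
    and b_ideal: "is_ideal (ring_of_integers K) \<bb>" and b_nz: "\<bb> \<noteq> {0}"
    and \<beta>L: "\<beta> \<in> quad_ext K s"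
    and ext: "ideal_mult \<bb> (ring_of_integers (quad_ext K s))
              = principal_ideal \<beta> (ring_of_integers (quad_ext K s))"
  shows "(quad_conj K s \<beta> / \<beta> = -1 \<longrightarrow>
            (\<exists>J. fractional_ideal K J \<and> ideal_mult J J = principal_ideal p (ring_of_integers K)))
       \<and> (\<forall>\<zeta> m. m \<ge> 2 \<and> primitive_root_of_unity (2 ^ m) \<zeta> \<and> quad_conj K s \<beta> / \<beta> = \<zeta> \<longrightarrow>
            (\<exists>J. fractional_ideal K J \<and> ideal_mult J J = principal_ideal (pi_n m) (ring_of_integers K)))"
proof -
  interpret principal_extension K p s \<bb> \<beta>
    by unfold_locales (fact K pK nonsq s b_ideal b_nz \<beta>L ext)+
  show ?thesis
    using square_ideal_if_conj_ratio_minus_one square_ideal_if_conj_ratio_root by blast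
qed

end
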